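(* Consider a multi-sender single-uniprior index-coding instance with binary messages, information-flow graph $\mathcal{G}$ and message graph $\mathcal{U}$, in which each message is known to exactly one sender (i.e., the senders' message sets $\mathcal{M}_1,\dots,\mathcal{M}_S$ partition the message set). Then \[ \tilde{\ell}^*(\mathcal{G},\mathcal{U}) = V_{\mathrm{out}}(\mathcal{G}) - N_{\mathrm{conn}}(\mathcal{G},\mathcal{U}), \] where $N_{\mathrm{conn}}(\mathcal{G},\mathcal{U})$ is the number of message-connected leaf SCCs of $\mathcal{G}$.
   Context: Multi-sender single-uniprior index coding with binary messages: there are $n$ receivers and $n$ independent messages $x_1,\dots,x_n$, each a single bit uniformly distributed on $\{0,1\}$. Receiver $i$ knows $x_i$ a priori and requests a set of messages not containing $x_i$. The information-flow graph is the directed graph $\mathcal{G}=(\mathcal{V},\mathcal{A})$, $\mathcal{V}=\{1,\dots,n\}$, with an arc $(j\to i)$ iff receiver $i$ requests $x_j$. There are $S$ senders; sender $s$ knows a subset $\mathcal{M}_s$ of the messages, and every message is known to some sender. An index code consists of, for each sender $s$, an encoding function mapping the messages in $\mathcal{M}_s$ to $\ell_s$ bits, and for each receiver $i$ a decoding function that, from all senders' outputs together with $x_i$, returns every message requested by $i$, for all message values; its length is $\sum_s \ell_s$. $\tilde{\ell}^*(\mathcal{G},\mathcal{U})$ is the minimum length of an index code for the instance. The message graph $\mathcal{U}$ is the undirected graph on $\mathcal{V}$ with an edge $\{i,j\}$ iff some sender knows both $x_i$ and $x_j$. A leaf vertex of $\mathcal{G}$ has no outgoing arcs; $V_{\mathrm{out}}(\mathcal{G})$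 is the number of non-leaf vertices. A leaf SCC of $\mathcal{G}$ is a strongly connected component with at least two vertices and no arc from it to a vertex outside it. A leaf SCC with vertex set $\mathcal{V}_S$ is message-connected iff the subgraph of $\mathcal{U}$ induced by $\mathcal{V}_S$ is connected. *)

theory Defs
  imports Main
begin

text \<open>Vertices / receivers / messages are 0..<n. The arc set A of the
information-flow graph contains (j, i) iff receiver i requests x_j.\<close>

definition is_index_code ::
  "nat \<Rightarrow> (nat \<times> nat) set \<Rightarrow> nat \<Rightarrow> (nat \<Rightarrow> nat set)
   \<Rightarrow> (nat \<Rightarrow> nat) \<Rightarrow> (nat \<Rightarrow> (nat \<Rightarrow> bool) \<Rightarrow> bool list)
   \<Rightarrow> (nat \<Rightarrow> bool list list \<Rightarrow> bool \<Rightarrow> nat \<Rightarrow> bool) \<Rightarrow> bool" where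
  "is_index_code n A S M l E D \<longleftrightarrow>
     (\<forall>s<S. \<forall>x. length (E s x) = l s) \<and>
     (\<forall>s<S. \<forall>x y. (\<forall>j\<in>M s. x j = y j) \<longrightarrow> E s x = E s y) \<and>
     (\<forall>i<n. \<forall>x. \<forall>j. (j, i) \<in> A \<longrightarrow>
        D i (map (\<lambda>s. E s x) [0..<S]) (x i) j = x j)"

definition index_code_length_achievable ::
  "nat \<Rightarrow> (nat \<times> nat) set \<Rightarrow> nat \<Rightarrow> (nat \<Rightarrow> nat set) \<Rightarrow> nat \<Rightarrow> bool" where
  "index_code_length_achievable n A S M L \<longleftrightarrow>
     (\<exists>l E D. is_index_code n A S M l E D \<and> (\<Sum>s<S. l s) = L)"

definition min_index_code_length ::
  "nat \<Rightarrow> (nat \<times> nat) set \<Rightarrow> nat \<Rightarrow> (nat \<Rightarrow> nat set) \<Rightarrow> nat" where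
  "min_index_code_length n A S M = (LEAST L. index_code_length_achievable n A S M L)"

definition V_out :: "nat \<Rightarrow> (nat \<times> nat) set \<Rightarrow> nat" where
  "V_out n A = card {i \<in> {0..<n}. \<exists>j. (i, j) \<in> A}"

definition is_scc :: "nat \<Rightarrow> (nat \<times> nat) set \<Rightarrow> nat set \<Rightarrow> bool" where
  "is_scc n A C \<longleftrightarrow> C \<subseteq> {0..<n} \<and> C \<noteq> {} \<and>
     (\<forall>u\<in>C. \<forall>v\<in>C. (u, v) \<in> A\<^sup>*) \<and>
     (\<forall>u\<in>C. \<forall>v\<in>{0..<n}. (u, v) \<in> A\<^sup>* \<and> (v, u) \<in> A\<^sup>* \<longrightarrow> v \<in> C)"

definition is_leaf_scc :: "nat \<Rightarrow> (nat \<times> nat) set \<Rightarrow> nat set \<Rightarrow> bool" where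
  "is_leaf_scc n A C \<longleftrightarrow> is_scc n A C \<and> card C \<ge> 2 \<and>
     (\<forall>u\<in>C. \<forall>v. (u, v) \<in> A \<longrightarrow> v \<in> C)"

text \<open>Message graph U: undirected edge {i,j} (i \<noteq> j) iff some sender knows both.\<close>
definition msg_edge :: "nat \<Rightarrow> (nat \<Rightarrow> nat set) \<Rightarrow> nat \<Rightarrow> nat \<Rightarrow> bool" where
  "msg_edge S M i j \<longleftrightarrow> i \<noteq> j \<and> (\<exists>s<S. i \<in> M s \<and> j \<in> M s)"

definition msg_connected :: "nat \<Rightarrow> (nat \<Rightarrow> nat set) \<Rightarrow> nat set \<Rightarrow> bool" where
  "msg_connected S M C \<longleftrightarrow>
     (\<forall>u\<in>C. \<forall>v\<in>C. (u, v) \<in> {(i, j). i \<in> C \<and> j \<in> C \<and> msg_edge S M i j}\<^sup>*)"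

definition N_conn :: "nat \<Rightarrow> (nat \<times> nat) set \<Rightarrow> nat \<Rightarrow> (nat \<Rightarrow> nat set) \<Rightarrow> nat" where
  "N_conn n A S M = card {C. is_leaf_scc n A C \<and> msg_connected S M C}"

end

theory Submission
  imports Defs "HOL-Library.FuncSet"
begin

text \<open>Call a message coded if its vertex has an outgoing arc and is not the least vertex of a
  message-connected leaf SCC. Agreement of two assignments with equal codewords propagates
  backwards along arcs, so a disagreement reaches a vertex \<open>w\<close> whose reachable set is a leaf
  SCC. Replacing one assignment by the other on the messages of a single sender keeps all
  codewords, which forces every vertex of that SCC to have the sender of \<open>w\<close>; the SCC is then
  message-connected, and its least vertex, which is not coded, carries the disagreement. So an
  index code separates all assignments of the coded bits and has length at least the number of
  coded messages. Conversely, each sender transmits its coded messages, XOR-ed with the least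
  vertex of their message-connected leaf SCC where there is one.\<close>

lemma rtrancl_bounded_arcs:
  assumes "A \<subseteq> {0..<n} \<times> {0..<n}" and "(u, w) \<in> A\<^sup>*" and "u < n"
  shows "w < n"
  using assms(2,3,1) by (induction rule: rtrancl_induct) auto

lemma reachable_terminal_vertex:
  assumes "finite (A\<^sup>* `` {v})"
  obtains w where "(v, w) \<in> A\<^sup>*" and "\<And>u. (w, u) \<in> A\<^sup>* \<Longrightarrow> (u, w) \<in> A\<^sup>*"
proof -
  obtain w where w: "(v, w) \<in> A\<^sup>*"
    and least: "\<And>u. (v, u) \<in> A\<^sup>* \<Longrightarrow> card (A\<^sup>* `` {w}) \<le> card (A\<^sup>* `` {u})"
    using ex_has_least_nat[of "\<lambda>w. (v, w) \<in> A\<^sup>*" v "\<lambda>w. card (A\<^sup>* `` {w})"] by auto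
  have "(u, w) \<in> A\<^sup>*" if wu: "(w, u) \<in> A\<^sup>*" for u
  proof (rule ccontr)
    assume uw: "(u, w) \<notin> A\<^sup>*"
    have "A\<^sup>* `` {u} \<subset> A\<^sup>* `` {w}"
      using wu uw by (auto intro: rtrancl_trans)
    moreover have "finite (A\<^sup>* `` {w})"
      using w by (intro finite_subset[OF _ assms]) (auto intro: rtrancl_trans)
    ultimately have "card (A\<^sup>* `` {u}) < card (A\<^sup>* `` {w})"
      by (rule psubset_card_mono[rotated])
    with least[of u] w wu show False by (meson not_le rtrancl_trans)
  qed
  with w that show ?thesis by blast
qed

lemma is_scc_subset:
  assumes "is_scc n A C" and "is_scc n A C'" and "u \<in> C" and "u \<in> C'"
  shows "C \<subseteq> C'"
proof
  fix v assume "v \<in> C"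
  then have "(u, v) \<in> A\<^sup>*" "(v, u) \<in> A\<^sup>*" "v \<in> {0..<n}"
    using assms(1,3) unfolding is_scc_def by blast+
  then show "v \<in> C'" using assms(2,4) unfolding is_scc_def by blast
qed

lemma is_scc_eq:
  assumes "is_scc n A C" and "is_scc n A C'" and "u \<in> C" and "u \<in> C'"
  shows "C = C'"
  using is_scc_subset assms by (metis subset_antisym)

lemma leaf_scc_out_arc:
  assumes "is_leaf_scc n A C" and "u \<in> C"
  obtains v where "(u, v) \<in> A"
proof -
  have "finite C" "card C \<ge> 2"
    using assms(1) finite_subset unfolding is_leaf_scc_def is_scc_def by auto
  then obtain v where "v \<in> C" "v \<noteq> u"
    using assms(2) by (metis card_le_Suc0_iff_eq not_less_eq_eq numeral_2_eq_2)
  moreover from this have "(u, v) \<in> A\<^sup>*"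
    using assms unfolding is_leaf_scc_def is_scc_def by blast
  ultimately show ?thesis using that by (metis converse_rtranclE)
qed

lemma terminal_reach_is_leaf_scc:
  assumes arcs: "A \<subseteq> {0..<n} \<times> {0..<n}" and no_loops: "\<forall>i. (i, i) \<notin> A"
    and out: "(w, w') \<in> A" and terminal: "\<And>u. (w, u) \<in> A\<^sup>* \<Longrightarrow> (u, w) \<in> A\<^sup>*"
  shows "is_leaf_scc n A (A\<^sup>* `` {w})"
proof -
  let ?C = "A\<^sup>* `` {w}"
  have "w < n" using arcs out by auto
  then have sub: "?C \<subseteq> {0..<n}" using rtrancl_bounded_arcs[OF arcs] by auto
  have "{w, w'} \<subseteq> ?C" using out by auto
  then have "card {w, w'} \<le> card ?C"
    by (rule card_mono[OF finite_subset[OF sub finite_atLeastLessThan]])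
  moreover have "w' \<noteq> w" using out no_loops by auto
  ultimately have "card ?C \<ge> 2" by simp
  moreover have "is_scc n A ?C"
    unfolding is_scc_def
  proof (intro conjI ballI impI)
    fix a b assume "a \<in> ?C" "b \<in> ?C"
    then show "(a, b) \<in> A\<^sup>*" using terminal by (blast intro: rtrancl_trans)
  next
    fix a b assume "a \<in> ?C" "(a, b) \<in> A\<^sup>* \<and> (b, a) \<in> A\<^sup>*"
    then show "b \<in> ?C" by (blast intro: rtrancl_trans)
  qed (use sub in auto)
  moreover have "\<forall>u\<in>?C. \<forall>v. (u, v) \<in> A \<longrightarrow> v \<in> ?C"
    by (auto intro: rtrancl_into_rtrancl)
  ultimately show ?thesis unfolding is_leaf_scc_def by blast
qed

lemma index_code_propagates_agreement:
  assumes code: "is_index_code n A S M l E D" and arcs: "A \<subseteq> {0..<n} \<times> {0..<n}"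
    and same: "\<forall>s<S. E s x = E s y" and "(v, u) \<in> A\<^sup>*" and "x u = y u"
  shows "x v = y v"
  using assms(4,5)
proof (induction rule: converse_rtrancl_induct)
  case (step a b)
  have "b < n" using arcs step(1) by auto
  then have decode: "D b (map (\<lambda>s. E s z) [0..<S]) (z b) a = z a" for z
    using code step(1) unfolding is_index_code_def by blast
  have codewords: "map (\<lambda>s. E s x) [0..<S] = map (\<lambda>s. E s y) [0..<S]"
    using same by simp
  have "x a = D b (map (\<lambda>s. E s x) [0..<S]) (x b) a" by (rule decode[symmetric])
  also have "\<dots> = D b (map (\<lambda>s. E s y) [0..<S]) (y b) a"
    using step.IH step.prems by (simp only: codewords)
  also have "\<dots> = y a" by (rule decode)
  finally show ?case .
qed

lemma index_code_length_ge_card: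
  assumes code: "is_index_code n A S M l E D" and "finite P"
    and determined: "\<And>x y. \<forall>s<S. E s x = E s y \<Longrightarrow> \<forall>i. i \<notin> P \<longrightarrow> x i = y i \<Longrightarrow> x = y"
  shows "card P \<le> (\<Sum>s<S. l s)"
proof -
  let ?codewords = "\<lambda>Q. restrict (\<lambda>s. E s (\<lambda>i. i \<in> Q)) {..<S}"
  let ?W = "\<Pi>\<^sub>E s\<in>{..<S}. {bs :: bool list. length bs = l s}"
  have "inj_on ?codewords (Pow P)"
  proof (rule inj_onI)
    fix Q Q' assume "Q \<in> Pow P" "Q' \<in> Pow P" "?codewords Q = ?codewords Q'"
    then have "(\<lambda>i. i \<in> Q) = (\<lambda>i. i \<in> Q')"
      by (intro determined) (metis lessThan_iff restrict_apply', blast)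
    then show "Q = Q'" by (metis Collect_mem_eq)
  qed
  moreover have "?codewords Q \<in> ?W" for Q
    using code unfolding is_index_code_def restrict_PiE_iff by auto
  moreover have "finite ?W"
    using finite_lists_length_eq[of "UNIV :: bool set"] by (simp add: finite_PiE)
  ultimately have "card (Pow P) \<le> card ?W" by (meson card_inj_on_le image_subsetI)
  also have "card ?W = (\<Prod>s<S. 2 ^ l s)"
    using card_lists_length_eq[of "UNIV :: bool set"] by (simp add: card_PiE)
  also have "\<dots> = 2 ^ (\<Sum>s<S. l s)"
    by (simp only: power_sum)
  finally have "(2::nat) ^ card P \<le> 2 ^ (\<Sum>s<S. l s)"
    using \<open>finite P\<close> by (simp only: card_Pow)
  then show ?thesis by simp
qed

locale partitioned_index_coding =
  fixes n S :: nat and A :: "(nat \<times> nat) set" and M :: "nat \<Rightarrow> nat set"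
  assumes arcs: "A \<subseteq> {0..<n} \<times> {0..<n}"
    and no_loops: "\<forall>i. (i, i) \<notin> A"
    and senders: "\<forall>s<S. M s \<subseteq> {0..<n}"
    and partition: "\<forall>j<n. \<exists>!s. s < S \<and> j \<in> M s"
begin

definition owner :: "nat \<Rightarrow> nat" where
  "owner j = (THE s. s < S \<and> j \<in> M s)"

lemma owner:
  assumes "j < n" shows "owner j < S \<and> j \<in> M (owner j)"
proof -
  have "\<exists>!s. s < S \<and> j \<in> M s" using partition assms by blast
  then show ?thesis unfolding owner_def by (rule theI')
qed

lemma owner_eq:
  assumes "s < S" and "j \<in> M s" shows "owner j = s"
proof -
  have "M s \<subseteq> {0..<n}" using senders assms(1) by blast
  then have "j < n" using assms(2) by auto
  then have "\<exists>!s. s < S \<and> j \<in> M s" using partition by blast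
  then show ?thesis unfolding owner_def by (rule the1_equality) (use assms in simp)
qed

definition non_leaves :: "nat set" where
  "non_leaves = {i \<in> {0..<n}. \<exists>j. (i, j) \<in> A}"

definition conn_leaf_sccs :: "nat set set" where
  "conn_leaf_sccs = {C. is_leaf_scc n A C \<and> msg_connected S M C}"

definition coded :: "nat set" where
  "coded = non_leaves - Min ` conn_leaf_sccs"

lemma finite_non_leaves: "finite non_leaves"
  unfolding non_leaves_def by simp

lemma finite_coded: "finite coded"
  unfolding coded_def using finite_non_leaves by simp

lemma conn_leaf_scc_bounded: "C \<in> conn_leaf_sccs \<Longrightarrow> C \<subseteq> {0..<n}"
  unfolding conn_leaf_sccs_def is_leaf_scc_def is_scc_def by simp

lemma Min_conn_leaf_scc:
  assumes "C \<in> conn_leaf_sccs" shows "Min C \<in> C"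
proof -
  have "C \<noteq> {}" using assms unfolding conn_leaf_sccs_def is_leaf_scc_def is_scc_def by simp
  then show ?thesis using finite_subset[OF conn_leaf_scc_bounded[OF assms]] by simp
qed

lemma conn_leaf_sccs_disjoint:
  "C \<in> conn_leaf_sccs \<Longrightarrow> C' \<in> conn_leaf_sccs \<Longrightarrow> u \<in> C \<Longrightarrow> u \<in> C' \<Longrightarrow> C = C'"
  unfolding conn_leaf_sccs_def is_leaf_scc_def using is_scc_eq by blast

lemma leaf_scc_subset_non_leaves:
  assumes "is_leaf_scc n A C" shows "C \<subseteq> non_leaves"
proof
  fix u assume "u \<in> C"
  then obtain v where "(u, v) \<in> A" using leaf_scc_out_arc[OF assms] by blast
  then show "u \<in> non_leaves" unfolding non_leaves_def using arcs by auto
qed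

lemma card_coded: "card coded = V_out n A - N_conn n A S M"
proof -
  have "finite conn_leaf_sccs"
    by (rule finite_subset[of _ "Pow {0..<n}"]) (auto dest: conn_leaf_scc_bounded)
  moreover have "inj_on Min conn_leaf_sccs"
    by (rule inj_onI) (metis Min_conn_leaf_scc conn_leaf_sccs_disjoint)
  ultimately have "card (Min ` conn_leaf_sccs) = N_conn n A S M"
    unfolding N_conn_def conn_leaf_sccs_def[symmetric] by (simp add: card_image)
  moreover have "Min ` conn_leaf_sccs \<subseteq> non_leaves"
    using Min_conn_leaf_scc leaf_scc_subset_non_leaves unfolding conn_leaf_sccs_def by blast
  ultimately show ?thesis
    unfolding coded_def V_out_def non_leaves_def[symmetric]
    by (simp add: card_Diff_subset finite_non_leaves finite_subset)
qed

lemma conn_leaf_scc_owner: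
  assumes "C \<in> conn_leaf_sccs" and "u \<in> C" and "v \<in> C"
  shows "owner u = owner v"
proof -
  have "(u, v) \<in> {(i, j). i \<in> C \<and> j \<in> C \<and> msg_edge S M i j}\<^sup>*"
    using assms unfolding conn_leaf_sccs_def msg_connected_def by blast
  then show ?thesis
  proof (induction rule: rtrancl_induct)
    case (step a b)
    then obtain s where "s < S" "a \<in> M s" "b \<in> M s" unfolding msg_edge_def by auto
    then show ?case using step.IH owner_eq by metis
  qed simp
qed

lemma same_owner_msg_connected:
  assumes "C \<subseteq> {0..<n}" and "\<forall>u\<in>C. \<forall>v\<in>C. owner u = owner v"
  shows "msg_connected S M C"
  unfolding msg_connected_def
proof (intro ballI)
  fix u v assume uv: "u \<in> C" "v \<in> C"
  show "(u, v) \<in> {(i, j). i \<in> C \<and> j \<in> C \<and> msg_edge S M i j}\<^sup>*"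
  proof (cases "u = v")
    case False
    have "u < n" "v < n" using uv assms(1) by auto
    then have "msg_edge S M u v"
      unfolding msg_edge_def using False owner assms(2) uv by metis
    then show ?thesis using uv by blast
  qed simp
qed

lemma codewords_of_mix:
  assumes code: "is_index_code n A S M l E D" and same: "\<forall>s<S. E s x = E s y" and "t < S"
  shows "\<forall>s<S. E s (\<lambda>i. if i \<in> M t then x i else y i) = E s x"
proof (intro allI impI)
  fix s assume "s < S"
  have local: "E s z = E s z'" if "\<forall>j\<in>M s. z j = z' j" for z z'
    using code \<open>s < S\<close> that unfolding is_index_code_def by blast
  show "E s (\<lambda>i. if i \<in> M t then x i else y i) = E s x"
  proof (cases "s = t")
    case False
    then have "j \<notin> M t" if "j \<in> M s" for j
      using that owner_eq \<open>s < S\<close> \<open>t < S\<close> by metis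
    then have "E s (\<lambda>i. if i \<in> M t then x i else y i) = E s y" by (intro local) simp
    then show ?thesis using same \<open>s < S\<close> by simp
  qed (intro local, simp)
qed

lemma owner_reachable_from_disagreement:
  assumes code: "is_index_code n A S M l E D" and same: "\<forall>s<S. E s x = E s y"
    and differ: "x w \<noteq> y w" and reach: "(w, c) \<in> A\<^sup>*" and "c < n"
  shows "owner c = owner w"
proof (rule ccontr)
  assume other: "owner c \<noteq> owner w"
  let ?t = "owner c"
  let ?z = "\<lambda>i. if i \<in> M ?t then x i else y i"
  have t: "?t < S" "c \<in> M ?t" using owner \<open>c < n\<close> by auto
  have "\<forall>s<S. E s ?z = E s x" using codewords_of_mix[OF code same t(1)] .
  moreover have "?z c = x c" using t by simp
  ultimately have "?z w = x w"
    using index_code_propagates_agreement[OF code arcs _ reach] by blast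
  moreover have "w \<notin> M ?t" using other owner_eq t(1) by metis
  ultimately show False using differ by simp
qed

lemma index_code_determined_by_coded:
  assumes code: "is_index_code n A S M l E D" and same: "\<forall>s<S. E s x = E s y"
    and agree: "\<forall>i. i \<notin> coded \<longrightarrow> x i = y i"
  shows "x = y"
proof (rule ccontr)
  assume "x \<noteq> y"
  then obtain v where "x v \<noteq> y v" by auto
  then have "v \<in> coded" using agree by auto
  then have "v < n" unfolding coded_def non_leaves_def by auto
  then have "A\<^sup>* `` {v} \<subseteq> {0..<n}" using rtrancl_bounded_arcs[OF arcs] by auto
  then have "finite (A\<^sup>* `` {v})" by (rule finite_subset) simp
  then obtain w where vw: "(v, w) \<in> A\<^sup>*" and terminal: "\<And>u. (w, u) \<in> A\<^sup>* \<Longrightarrow> (u, w) \<in> A\<^sup>*"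
    by (rule reachable_terminal_vertex) blast
  have differ: "x w \<noteq> y w"
    using index_code_propagates_agreement[OF code arcs same vw] \<open>x v \<noteq> y v\<close> by blast
  then have "w \<in> non_leaves" using agree unfolding coded_def by blast
  then obtain w' where "(w, w') \<in> A" and "w < n" unfolding non_leaves_def by auto
  let ?C = "A\<^sup>* `` {w}"
  have leaf: "is_leaf_scc n A ?C"
    using terminal_reach_is_leaf_scc[OF arcs no_loops \<open>(w, w') \<in> A\<close> terminal] .
  have bounded: "?C \<subseteq> {0..<n}" using rtrancl_bounded_arcs[OF arcs _ \<open>w < n\<close>] by auto
  have "owner c = owner w" if "c \<in> ?C" for c
    using owner_reachable_from_disagreement[OF code same differ] that bounded by auto
  then have "msg_connected S M ?C"
    by (intro same_owner_msg_connected[OF bounded] ballI) metis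
  then have "?C \<in> conn_leaf_sccs" unfolding conn_leaf_sccs_def using leaf by blast
  then have "Min ?C \<notin> coded" and "(w, Min ?C) \<in> A\<^sup>*"
    unfolding coded_def using Min_conn_leaf_scc by auto
  then show False
    using agree differ index_code_propagates_agreement[OF code arcs same] by blast
qed

lemma card_coded_le_length:
  assumes code: "is_index_code n A S M l E D"
  shows "card coded \<le> (\<Sum>s<S. l s)"
  using index_code_length_ge_card[OF code finite_coded]
    index_code_determined_by_coded[OF code] by blast

definition rep :: "nat \<Rightarrow> nat" where
  "rep j = Min (THE C. C \<in> conn_leaf_sccs \<and> j \<in> C)"

lemma rep_eq:
  assumes "C \<in> conn_leaf_sccs" and "j \<in> C" shows "rep j = Min C"
proof -
  have "(THE C. C \<in> conn_leaf_sccs \<and> j \<in> C) = C"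
    by (rule the_equality) (use assms conn_leaf_sccs_disjoint in auto)
  then show ?thesis unfolding rep_def by simp
qed

definition offset :: "(nat \<Rightarrow> bool) \<Rightarrow> nat \<Rightarrow> bool" where
  "offset x j \<longleftrightarrow> j \<in> \<Union>conn_leaf_sccs \<and> x (rep j)"

definition coded_by :: "nat \<Rightarrow> nat list" where
  "coded_by s = sorted_list_of_set {j \<in> coded. j \<in> M s}"

definition encode :: "nat \<Rightarrow> (nat \<Rightarrow> bool) \<Rightarrow> bool list" where
  "encode s x = map (\<lambda>j. x j \<noteq> offset x j) (coded_by s)"

definition read :: "bool list list \<Rightarrow> nat \<Rightarrow> bool" where
  "read cws j \<longleftrightarrow> j \<in> coded \<and> the (map_of (zip (coded_by (owner j)) (cws ! owner j)) j)"

text \<open>A receiver in a message-connected leaf SCC requests only messages of that SCC, and it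
  recovers the value at the representative \<open>rep\<close> from its own message and its own received bit.\<close>
definition decode :: "nat \<Rightarrow> bool list list \<Rightarrow> bool \<Rightarrow> nat \<Rightarrow> bool" where
  "decode i cws xi j \<longleftrightarrow> read cws j \<noteq> (j \<in> \<Union>conn_leaf_sccs \<and> (xi \<noteq> read cws i))"

lemma set_coded_by: "set (coded_by s) = {j \<in> coded. j \<in> M s}"
  unfolding coded_by_def using finite_coded by simp

lemma read_encode:
  assumes "j \<in> non_leaves"
  shows "read (map (\<lambda>s. encode s x) [0..<S]) j \<longleftrightarrow> x j \<noteq> offset x j"
proof (cases "j \<in> coded")
  case True
  then have "owner j < S" "j \<in> M (owner j)" using owner assms unfolding non_leaves_def by auto
  then have "j \<in> set (coded_by (owner j))" using True set_coded_by by simp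
  with \<open>owner j < S\<close> True show ?thesis
    unfolding read_def encode_def by (simp add: map_of_zip_map)
next
  case False
  then obtain C where "C \<in> conn_leaf_sccs" "j = Min C" using assms unfolding coded_def by auto
  then have "j \<in> \<Union>conn_leaf_sccs" "rep j = j" using Min_conn_leaf_scc rep_eq by auto
  then show ?thesis using False unfolding read_def offset_def by simp
qed

lemma encode_local:
  assumes "s < S" and "\<forall>j\<in>M s. x j = y j" shows "encode s x = encode s y"
  unfolding encode_def
proof (rule map_cong[OF refl])
  fix j assume "j \<in> set (coded_by s)"
  then have j: "j \<in> M s" using set_coded_by by simp
  have "offset x j = offset y j"
  proof (cases "j \<in> \<Union>conn_leaf_sccs")
    case True
    then obtain C where C: "C \<in> conn_leaf_sccs" "j \<in> C" by auto
    then have "Min C < n" using Min_conn_leaf_scc conn_leaf_scc_bounded by fastforce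
    moreover have "owner (Min C) = s"
      using conn_leaf_scc_owner[OF C(1) Min_conn_leaf_scc[OF C(1)] C(2)] owner_eq[OF assms(1) j] by simp
    ultimately have "rep j \<in> M s" using rep_eq[OF C] owner by metis
    then show ?thesis using assms(2) unfolding offset_def by simp
  qed (simp add: offset_def)
  then show "(x j \<noteq> offset x j) = (y j \<noteq> offset y j)" using assms(2) j by simp
qed

lemma decode_encode:
  assumes "(j, i) \<in> A"
  shows "decode i (map (\<lambda>s. encode s x) [0..<S]) (x i) j = x j"
proof -
  let ?cws = "map (\<lambda>s. encode s x) [0..<S]"
  have "j \<in> non_leaves" using assms arcs unfolding non_leaves_def by auto
  then have read_j: "read ?cws j = (x j \<noteq> offset x j)" by (rule read_encode)
  show ?thesis
  proof (cases "j \<in> \<Union>conn_leaf_sccs")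
    case True
    then obtain C where C: "C \<in> conn_leaf_sccs" "j \<in> C" by auto
    then have "i \<in> C" using assms unfolding conn_leaf_sccs_def is_leaf_scc_def by auto
    then have "i \<in> non_leaves" "rep i = Min C" "i \<in> \<Union>conn_leaf_sccs"
      using C(1) leaf_scc_subset_non_leaves rep_eq unfolding conn_leaf_sccs_def by auto
    then have "read ?cws i = (x i \<noteq> x (Min C))"
      using read_encode[of i x] unfolding offset_def by simp
    then show ?thesis using read_j True rep_eq[OF C] unfolding decode_def offset_def by auto
  qed (simp add: decode_def read_j offset_def)
qed

lemma index_code_constructed:
  "is_index_code n A S M (\<lambda>s. card {j \<in> coded. j \<in> M s}) encode decode"
  unfolding is_index_code_def
proof (intro conjI allI impI)
  show "length (encode s x) = card {j \<in> coded. j \<in> M s}" for s x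
    unfolding encode_def coded_by_def by simp
qed (simp_all add: encode_local decode_encode)

lemma sum_coded_by_owner: "(\<Sum>s<S. card {j \<in> coded. j \<in> M s}) = card coded"
proof -
  have "(\<Union>s<S. {j \<in> coded. j \<in> M s}) = coded"
    using owner unfolding coded_def non_leaves_def by fastforce
  moreover have "card (\<Union>s<S. {j \<in> coded. j \<in> M s}) = (\<Sum>s<S. card {j \<in> coded. j \<in> M s})"
    by (rule card_UN_disjoint) (use finite_coded owner_eq in auto)
  ultimately show ?thesis by simp
qed

end

theorem corollary3:
  fixes n S :: nat and A :: "(nat \<times> nat) set" and M :: "nat \<Rightarrow> nat set"
  assumes arcs: "A \<subseteq> {0..<n} \<times> {0..<n}"
    and no_loops: "\<forall>i. (i, i) \<notin> A"
    and senders: "\<forall>s<S. M s \<subseteq> {0..<n}"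
    and partition: "\<forall>j<n. \<exists>!s. s < S \<and> j \<in> M s"
  shows "min_index_code_length n A S M = V_out n A - N_conn n A S M"
proof -
  interpret partitioned_index_coding n S A M
    using assms by unfold_locales
  have "min_index_code_length n A S M = card coded"
    unfolding min_index_code_length_def index_code_length_achievable_def
  proof (rule Least_equality)
    show "\<exists>l E D. is_index_code n A S M l E D \<and> (\<Sum>s<S. l s) = card coded"
      using index_code_constructed sum_coded_by_owner by blast
  qed (use card_coded_le_length in blast)
  then show ?thesis using card_coded by simp
qed

end
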